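(* Let $p>2$ be a prime and $\alpha\ge 3$ an integer, and let $n=p^\alpha$. Then the independent domination polynomial $D_i(\Gamma(\mathbb{Z}_n),x)$ is log-concave but not unimodal.
   Context: For an integer $n\ge 2$, the zero divisor graph $\Gamma(\mathbb{Z}_n)$ is the simple graph whose vertices are the nonzero zero divisors of $\mathbb{Z}_n$, with distinct vertices $a,b$ adjacent if and only if $ab\equiv 0\pmod n$. An independent dominating set of a graph $G$ is a set of pairwise non-adjacent vertices such that every vertex outside the set is adjacent to some vertex in it. If $d_i(G,k)$ denotes the number of independent dominating sets of $G$ of cardinality $k$, the independent domination polynomial is $D_i(G,x)=\sum_{k} d_i(G,k)x^k$. For a polynomial $\sum_{i=0}^b a_i x^i$ of degree $b$ (with $a_i=0$ for absent powers): it is unimodal if there is an index $0\le t\le b$ with $a_0\le a_1\le\dots\le a_t\ge a_{t+1}\ge\dots\ge a_b$; it is log-concave if $a_j^2\ge a_{j-1}a_{j+1}$ for all $1\le j\le b-1$. *)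

theory Defs
  imports "HOL-Computational_Algebra.Polynomial"
begin

definition zd_vertices :: "nat \<Rightarrow> nat set" where
  "zd_vertices n = {a. 0 < a \<and> a < n \<and> (\<exists>b. 0 < b \<and> b < n \<and> (a * b) mod n = 0)}"

definition zd_adj :: "nat \<Rightarrow> nat \<Rightarrow> nat \<Rightarrow> bool" where
  "zd_adj n a b \<longleftrightarrow> a \<noteq> b \<and> (a * b) mod n = 0"

definition indep_dom_set :: "nat \<Rightarrow> nat set \<Rightarrow> bool" where
  "indep_dom_set n S \<longleftrightarrow> S \<subseteq> zd_vertices n
     \<and> (\<forall>a\<in>S. \<forall>b\<in>S. \<not> zd_adj n a b)
     \<and> (\<forall>v\<in>zd_vertices n - S. \<exists>u\<in>S. zd_adj n v u)"

definition num_ids :: "nat \<Rightarrow> nat \<Rightarrow> nat" where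
  "num_ids n k = card {S. indep_dom_set n S \<and> card S = k}"

definition indep_dom_poly :: "nat \<Rightarrow> nat poly" where
  "indep_dom_poly n = (\<Sum>k\<le>card (zd_vertices n). monom (num_ids n k) k)"

definition unimodal :: "'a::{zero,linorder} poly \<Rightarrow> bool" where
  "unimodal p \<longleftrightarrow> (\<exists>t\<le>degree p.
      (\<forall>i<t. coeff p i \<le> coeff p (Suc i)) \<and>
      (\<forall>i. t \<le> i \<and> i < degree p \<longrightarrow> coeff p (Suc i) \<le> coeff p i))"

definition log_concave :: "'a::{comm_semiring_1,linorder} poly \<Rightarrow> bool" where
  "log_concave p \<longleftrightarrow> (\<forall>j. 1 \<le> j \<and> j + 1 \<le> degree p \<longrightarrow>
      coeff p (j - 1) * coeff p (j + 1) \<le> (coeff p j)^2)"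

end

theory Submission
  imports Defs
begin

text \<open>The vertices of the zero divisor graph of \<open>\<int>/p\<^sup>\<alpha>\<close> are the nonzero multiples of \<open>p\<close> below
  \<open>p ^ \<alpha>\<close>, and two of them are adjacent iff their \<open>p\<close>-multiplicities add up to at least \<open>\<alpha>\<close>. An
  independent dominating set is therefore determined by a vertex \<open>s\<close> of maximal multiplicity \<open>m\<close>: it
  consists of \<open>s\<close> and all vertices of multiplicity below \<open>\<alpha> - m\<close>, and domination forces
  \<open>\<alpha> \<le> 2 m + 1\<close>. So the possible sizes are \<open>p ^ (\<alpha> - 1) - p ^ m + e\<close> with \<open>0 < m < \<alpha>\<close> and
  \<open>e \<in> {0, 1}\<close>. For \<open>p \<ge> 3\<close> no two of them differ by 2, so every product of the coefficients at
  \<open>j - 1\<close> and \<open>j + 1\<close> vanishes; and the coefficients at 1 and at some \<open>d \<ge> 3\<close> are positive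
  (take \<open>m = \<alpha> - 1\<close> and \<open>m = \<alpha> - 2\<close>) while the one at 2 is zero, which breaks unimodality.\<close>

lemma log_concave_if_no_gap_two:
  fixes q :: "nat poly"
  assumes "\<And>j. coeff q j \<noteq> 0 \<Longrightarrow> coeff q (j + 2) = 0"
  shows "log_concave q"
  unfolding log_concave_def
proof (intro allI impI)
  fix j :: nat
  assume "1 \<le> j \<and> j + 1 \<le> degree q"
  then have "j + 1 = (j - 1) + 2" by arith
  then have "coeff q (j - 1) * coeff q (j + 1) = 0"
    using assms[of "j - 1"] by (cases "coeff q (j - 1) = 0") simp_all
  then show "coeff q (j - 1) * coeff q (j + 1) \<le> (coeff q j)\<^sup>2" by (metis zero_le)
qed

lemma not_unimodal_if_internal_zero:
  fixes q :: "'a::{zero,linorder} poly"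
  assumes "i < j" "j < k" and pos_i: "0 < coeff q i" and zero_j: "coeff q j = 0"
    and pos_k: "0 < coeff q k"
  shows "\<not> unimodal q"
proof
  assume "unimodal q"
  then obtain t where
    up: "\<And>l. l < t \<Longrightarrow> coeff q l \<le> coeff q (Suc l)" and
    down: "\<And>l. t \<le> l \<Longrightarrow> l < degree q \<Longrightarrow> coeff q (Suc l) \<le> coeff q l"
    unfolding unimodal_def by blast
  have "k \<le> degree q" using pos_k by (intro le_degree) auto
  show False
  proof (cases "j \<le> t")
    case True
    have "coeff q i \<le> coeff q l" if "i \<le> l" "l \<le> t" for l
      using that
    proof (induction l rule: dec_induct)
      case (step l)
      then show ?case using up[of l] by auto
    qed simp
    then have "coeff q i \<le> coeff q j" using True \<open>i < j\<close> by simp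
    then show False using pos_i zero_j by simp
  next
    case False
    have "coeff q l \<le> coeff q j" if "j \<le> l" "l \<le> k" for l
      using that
    proof (induction l rule: dec_induct)
      case (step l)
      then show ?case using down[of l] False \<open>k \<le> degree q\<close> by force
    qed simp
    then have "coeff q k \<le> coeff q j" using \<open>j < k\<close> by simp
    then show False using pos_k zero_j by simp
  qed
qed

lemma diff_power_add_ne_plus_2:
  fixes p :: nat
  assumes "3 \<le> p" "0 < m" "0 < m'" "m \<le> N" "m' \<le> N" "e \<le> 1" "e' \<le> 1"
  shows "p ^ N - p ^ m' + e' \<noteq> p ^ N - p ^ m + e + 2"
proof -
  have le_N: "p ^ m \<le> p ^ N" "p ^ m' \<le> p ^ N" using assms by (auto intro: power_increasing)
  have ge_3: "3 \<le> p ^ m" "3 \<le> p ^ m'"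
    using assms power_increasing[of 1 m p] power_increasing[of 1 m' p] by auto
  have grows: "3 * p ^ l \<le> p ^ l'" if "l < l'" for l l'
  proof -
    have "3 * p ^ l \<le> p * p ^ l" using assms by simp
    also have "\<dots> \<le> p ^ l'" using that assms power_increasing[of "Suc l" l' p] by simp
    finally show ?thesis .
  qed
  consider "m < m'" | "m = m'" | "m' < m" by linarith
  then show ?thesis
  proof cases
    case 1
    then show ?thesis using grows[of m m'] le_N ge_3 assms by linarith
  next
    case 3
    then show ?thesis using grows[of m' m] le_N ge_3 assms by linarith
  qed (use assms in auto)
qed

lemma card_positive_multiples_below:
  fixes d q :: nat
  assumes "0 < d"
  shows "card {a. 0 < a \<and> a < d * q \<and> d dvd a} = q - 1"
proof -
  have "{a. 0 < a \<and> a < d * q \<and> d dvd a} = (*) d ` {1..<q}"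
    using assms by (auto elim!: dvdE)
  moreover have "inj_on ((*) d) {1..<q}" using assms by (auto simp: inj_on_def)
  ultimately show ?thesis by (simp add: card_image)
qed

lemma finite_zd_vertices: "finite (zd_vertices n)"
  by (rule finite_subset[of _ "{..<n}"]) (auto simp: zd_vertices_def)

lemma coeff_indep_dom_poly: "coeff (indep_dom_poly n) k = num_ids n k"
proof -
  have "coeff (indep_dom_poly n) k = (if k \<le> card (zd_vertices n) then num_ids n k else 0)"
    unfolding indep_dom_poly_def by (simp add: coeff_sum)
  moreover have "num_ids n k = 0" if "card (zd_vertices n) < k"
  proof -
    have "card S < k" if "indep_dom_set n S" for S
      using that \<open>card (zd_vertices n) < k\<close> card_mono[OF finite_zd_vertices]
      unfolding indep_dom_set_def by fastforce
    then have "{S. indep_dom_set n S \<and> card S = k} = {}" by fastforce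
    then show ?thesis unfolding num_ids_def by (simp only: card.empty)
  qed
  ultimately show ?thesis by auto
qed

lemma coeff_indep_dom_poly_pos_iff:
  "0 < coeff (indep_dom_poly n) k \<longleftrightarrow> (\<exists>S. indep_dom_set n S \<and> card S = k)"
proof -
  have "finite {S. indep_dom_set n S \<and> card S = k}"
    by (rule finite_subset[of _ "Pow (zd_vertices n)"])
      (auto simp: indep_dom_set_def finite_zd_vertices)
  then show ?thesis
    unfolding coeff_indep_dom_poly num_ids_def by (auto simp: card_gt_0_iff)
qed

locale prime_power_zero_divisor_graph =
  fixes p \<alpha> :: nat
  assumes prime: "prime p" and two_le_exp: "2 \<le> \<alpha>"
begin

lemma mult_mod_prime_power_eq_0_iff:
  assumes "0 < a" "0 < b"
  shows "(a * b) mod p ^ \<alpha> = 0 \<longleftrightarrow> \<alpha> \<le> multiplicity p a + multiplicity p b"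
proof -
  have "(a * b) mod p ^ \<alpha> = 0 \<longleftrightarrow> p ^ \<alpha> dvd a * b" by (simp add: mod_eq_0_iff_dvd)
  also have "\<dots> \<longleftrightarrow> \<alpha> \<le> multiplicity p (a * b)"
    by (rule power_dvd_iff_le_multiplicity) (use assms prime in auto)
  also have "multiplicity p (a * b) = multiplicity p a + multiplicity p b"
    using assms prime by (simp add: prime_elem_multiplicity_mult_distrib)
  finally show ?thesis .
qed

lemma zd_vertices_prime_power: "zd_vertices (p ^ \<alpha>) = {a. 0 < a \<and> a < p ^ \<alpha> \<and> p dvd a}"
proof (intro set_eqI iffI)
  fix a assume "a \<in> zd_vertices (p ^ \<alpha>)"
  then obtain b where ab: "0 < a" "a < p ^ \<alpha>" "0 < b" "b < p ^ \<alpha>" "p ^ \<alpha> dvd a * b"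
    unfolding zd_vertices_def by auto
  have "p dvd a"
  proof (rule ccontr)
    assume "\<not> p dvd a"
    then have "coprime (p ^ \<alpha>) a" using prime by (simp add: prime_imp_coprime)
    then have "p ^ \<alpha> dvd b" using ab(5) by (simp add: coprime_dvd_mult_right_iff)
    then show False using ab(3,4) by (auto dest: dvd_imp_le)
  qed
  then show "a \<in> {a. 0 < a \<and> a < p ^ \<alpha> \<and> p dvd a}" using ab by auto
next
  fix a assume a: "a \<in> {a. 0 < a \<and> a < p ^ \<alpha> \<and> p dvd a}"
  then obtain c where "a = p * c" by blast
  moreover have "p * p ^ (\<alpha> - 1) = p ^ \<alpha>" using two_le_exp by (simp flip: power_Suc)
  ultimately have "a * p ^ (\<alpha> - 1) = c * p ^ \<alpha>" by (simp add: ac_simps)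
  then have "(a * p ^ (\<alpha> - 1)) mod p ^ \<alpha> = 0" by simp
  moreover have "p ^ (\<alpha> - 1) < p ^ \<alpha>"
    using prime_gt_1_nat[OF prime] two_le_exp by (intro power_strict_increasing) auto
  ultimately show "a \<in> zd_vertices (p ^ \<alpha>)"
    using a prime unfolding zd_vertices_def by (intro CollectI conjI exI[of _ "p ^ (\<alpha> - 1)"]) auto
qed

lemma zd_vertex_multiplicity:
  assumes "a \<in> zd_vertices (p ^ \<alpha>)"
  shows "0 < a" "0 < multiplicity p a" "multiplicity p a < \<alpha>"
proof -
  have a: "0 < a" "a < p ^ \<alpha>" "p dvd a" using assms zd_vertices_prime_power by auto
  then show "0 < a" by simp
  show "0 < multiplicity p a" using a prime by (simp add: prime_multiplicity_gt_zero_iff)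
  have "\<not> p ^ \<alpha> dvd a" using a by (auto dest: dvd_imp_le)
  then show "multiplicity p a < \<alpha>" using a prime by (intro multiplicity_lessI) auto
qed

lemma prime_power_in_zd_vertices:
  assumes "0 < m" "m < \<alpha>"
  shows "p ^ m \<in> zd_vertices (p ^ \<alpha>)"
proof -
  have "p ^ m < p ^ \<alpha>" using prime_gt_1_nat[OF prime] assms by (intro power_strict_increasing)
  then show ?thesis using assms prime by (simp add: zd_vertices_prime_power prime_gt_0_nat)
qed

lemma zd_adj_prime_power_iff:
  assumes "a \<in> zd_vertices (p ^ \<alpha>)" "b \<in> zd_vertices (p ^ \<alpha>)"
  shows "zd_adj (p ^ \<alpha>) a b \<longleftrightarrow> a \<noteq> b \<and> \<alpha> \<le> multiplicity p a + multiplicity p b"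
  using assms zd_vertex_multiplicity(1) mult_mod_prime_power_eq_0_iff by (auto simp: zd_adj_def)

definition low_vertices :: "nat \<Rightarrow> nat set" where
  "low_vertices m = {a \<in> zd_vertices (p ^ \<alpha>). multiplicity p a + m < \<alpha>}"

lemma card_low_vertices:
  assumes "m < \<alpha>"
  shows "card (low_vertices m) = p ^ (\<alpha> - 1) - p ^ m"
proof -
  define A where "A = {a. 0 < a \<and> a < p * p ^ (\<alpha> - 1) \<and> p dvd a}"
  define B where "B = {a. 0 < a \<and> a < p ^ (\<alpha> - m) * p ^ m \<and> p ^ (\<alpha> - m) dvd a}"
  have A: "p * p ^ (\<alpha> - 1) = p ^ \<alpha>" using two_le_exp by (simp flip: power_Suc)
  have B: "p ^ (\<alpha> - m) * p ^ m = p ^ \<alpha>" using assms by (simp flip: power_add)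
  have "multiplicity p a + m < \<alpha> \<longleftrightarrow> \<not> p ^ (\<alpha> - m) dvd a" if "0 < a" for a
    using assms that prime_gt_1_nat[OF prime] power_dvd_iff_le_multiplicity[of a p "\<alpha> - m"] by auto
  then have "low_vertices m = A - B"
    unfolding low_vertices_def A_def B_def A B zd_vertices_prime_power by auto
  moreover have "B \<subseteq> A"
    unfolding A_def B_def A B using assms by (auto intro: dvd_trans[OF dvd_power[of "\<alpha> - m" p]])
  moreover have "card A = p ^ (\<alpha> - 1) - 1" "card B = p ^ m - 1"
    unfolding A_def B_def using prime by (simp_all add: card_positive_multiples_below prime_gt_0_nat)
  moreover have "p ^ m \<le> p ^ (\<alpha> - 1)" "1 \<le> p ^ m"
    using assms prime_gt_1_nat[OF prime] by (auto intro: power_increasing)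
  ultimately show ?thesis
    by (simp add: card_Diff_subset A_def B_def)
qed

lemma indep_dom_set_insert_low_vertices:
  assumes s: "s \<in> zd_vertices (p ^ \<alpha>)" and half: "\<alpha> \<le> 2 * multiplicity p s + 1"
  shows "indep_dom_set (p ^ \<alpha>) (insert s (low_vertices (multiplicity p s)))"
    (is "indep_dom_set _ ?S")
proof -
  have SV: "?S \<subseteq> zd_vertices (p ^ \<alpha>)" using s by (auto simp: low_vertices_def)
  have below_s: "multiplicity p b \<le> multiplicity p s" if "b \<in> ?S" for b
    using that half by (auto simp: low_vertices_def)
  have "\<not> zd_adj (p ^ \<alpha>) a b" if "a \<in> ?S" "b \<in> ?S" for a b
  proof
    assume adj: "zd_adj (p ^ \<alpha>) a b"
    moreover have "a \<in> zd_vertices (p ^ \<alpha>)" "b \<in> zd_vertices (p ^ \<alpha>)" using that SV by auto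
    ultimately have "\<alpha> \<le> multiplicity p a + multiplicity p b" "a \<noteq> b"
      by (simp_all add: zd_adj_prime_power_iff)
    moreover have "multiplicity p a + multiplicity p s < \<alpha> \<or> multiplicity p b + multiplicity p s < \<alpha>"
      using that \<open>a \<noteq> b\<close> by (auto simp: low_vertices_def)
    ultimately show False using below_s that by fastforce
  qed
  moreover have "zd_adj (p ^ \<alpha>) x s" if "x \<in> zd_vertices (p ^ \<alpha>) - ?S" for x
    using that s by (auto simp: zd_adj_prime_power_iff low_vertices_def)
  ultimately show ?thesis using SV unfolding indep_dom_set_def by blast
qed

lemma indep_dom_set_eq_insert_low_vertices:
  assumes "indep_dom_set (p ^ \<alpha>) S"
  obtains s where "s \<in> zd_vertices (p ^ \<alpha>)" "\<alpha> \<le> 2 * multiplicity p s + 1"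
    "S = insert s (low_vertices (multiplicity p s))"
proof -
  have SV: "S \<subseteq> zd_vertices (p ^ \<alpha>)"
    and indep: "\<And>a b. a \<in> S \<Longrightarrow> b \<in> S \<Longrightarrow> \<not> zd_adj (p ^ \<alpha>) a b"
    and dom: "\<And>x. x \<in> zd_vertices (p ^ \<alpha>) - S \<Longrightarrow> \<exists>u\<in>S. zd_adj (p ^ \<alpha>) x u"
    using assms unfolding indep_dom_set_def by blast+
  have "p \<in> zd_vertices (p ^ \<alpha>)"
    using prime_power_in_zd_vertices[of 1] two_le_exp by simp
  then obtain a where "a \<in> S" using dom by blast
  moreover have "\<forall>b. b \<in> S \<longrightarrow> multiplicity p b < \<alpha>" using SV zd_vertex_multiplicity by blast
  ultimately obtain s where s: "s \<in> S" and s_max: "\<And>a. a \<in> S \<Longrightarrow> multiplicity p a \<le> multiplicity p s"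
    using Lattices_Big.ex_has_greatest_nat[of "\<lambda>x. x \<in> S" a "multiplicity p" \<alpha>] by blast
  let ?L = "low_vertices (multiplicity p s)"
  have "?L \<subseteq> S"
  proof
    fix a assume a: "a \<in> ?L"
    show "a \<in> S"
    proof (rule ccontr)
      assume "a \<notin> S"
      then obtain u where "u \<in> S" "zd_adj (p ^ \<alpha>) a u" using a dom by (auto simp: low_vertices_def)
      then show False using a s_max[of u] SV by (auto simp: zd_adj_prime_power_iff low_vertices_def)
    qed
  qed
  moreover have "a \<in> ?L" if "a \<in> S" "a \<noteq> s" for a
  proof -
    have "a \<in> zd_vertices (p ^ \<alpha>)" "s \<in> zd_vertices (p ^ \<alpha>)" using that s SV by auto
    then show ?thesis using indep[OF that(1) s] that(2) by (simp add: zd_adj_prime_power_iff low_vertices_def)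
  qed
  ultimately have S: "S = insert s ?L" using s by blast
  have "\<alpha> \<le> 2 * multiplicity p s + 1"
  proof (rule ccontr)
    assume big: "\<not> ?thesis"
    define k where "k = multiplicity p s + 1"
    have k: "multiplicity p (p ^ k) = k"
      using multiplicity_prime_power[OF prime_imp_prime_elem[OF prime]] .
    have "0 < k" "k + multiplicity p s < \<alpha>" using big by (simp_all add: k_def)
    then have "p ^ k \<in> ?L"
      using prime_power_in_zd_vertices[of k] by (simp add: low_vertices_def k)
    then show False using \<open>?L \<subseteq> S\<close> s_max[of "p ^ k"] k unfolding k_def by auto
  qed
  then show ?thesis using that s SV S by blast
qed

lemma card_insert_low_vertices:
  assumes "s \<in> zd_vertices (p ^ \<alpha>)"
  shows "card (insert s (low_vertices (multiplicity p s)))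
    = p ^ (\<alpha> - 1) - p ^ multiplicity p s + (if 2 * multiplicity p s < \<alpha> then 0 else 1)"
proof -
  have "finite (low_vertices (multiplicity p s))"
    using finite_zd_vertices by (auto simp: low_vertices_def)
  moreover have "s \<in> low_vertices (multiplicity p s) \<longleftrightarrow> 2 * multiplicity p s < \<alpha>"
    using assms by (auto simp: low_vertices_def)
  ultimately show ?thesis
    using assms zd_vertex_multiplicity(3) by (simp add: card_insert_if card_low_vertices)
qed

lemma coeff_indep_dom_poly_pos:
  assumes "0 < m" "m < \<alpha>" "\<alpha> \<le> 2 * m + 1"
  shows "0 < coeff (indep_dom_poly (p ^ \<alpha>)) (p ^ (\<alpha> - 1) - p ^ m + (if 2 * m < \<alpha> then 0 else 1))"
proof -
  have "p ^ m \<in> zd_vertices (p ^ \<alpha>)" using assms(1,2) by (rule prime_power_in_zd_vertices)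
  moreover have "multiplicity p (p ^ m) = m"
    using multiplicity_prime_power[OF prime_imp_prime_elem[OF prime]] .
  ultimately have "indep_dom_set (p ^ \<alpha>) (insert (p ^ m) (low_vertices m))"
    and "card (insert (p ^ m) (low_vertices m))
      = p ^ (\<alpha> - 1) - p ^ m + (if 2 * m < \<alpha> then 0 else 1)"
    using assms indep_dom_set_insert_low_vertices card_insert_low_vertices by force+
  then show ?thesis unfolding coeff_indep_dom_poly_pos_iff by blast
qed

lemma coeff_indep_dom_poly_nonzero:
  assumes "coeff (indep_dom_poly (p ^ \<alpha>)) k \<noteq> 0"
  obtains m e where "0 < m" "m < \<alpha>" "e \<le> 1" "k = p ^ (\<alpha> - 1) - p ^ m + e"
proof -
  obtain S where "indep_dom_set (p ^ \<alpha>) S" "card S = k"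
    using assms coeff_indep_dom_poly_pos_iff by blast
  then obtain s where s: "s \<in> zd_vertices (p ^ \<alpha>)"
    "k = card (insert s (low_vertices (multiplicity p s)))"
    using indep_dom_set_eq_insert_low_vertices by metis
  show ?thesis
  proof (rule that)
    show "k = p ^ (\<alpha> - 1) - p ^ multiplicity p s + (if 2 * multiplicity p s < \<alpha> then 0 else 1)"
      using s card_insert_low_vertices by simp
  qed (use s zd_vertex_multiplicity in auto)
qed

lemma coeff_indep_dom_poly_gap:
  assumes "3 \<le> p" "coeff (indep_dom_poly (p ^ \<alpha>)) k \<noteq> 0"
  shows "coeff (indep_dom_poly (p ^ \<alpha>)) (k + 2) = 0"
proof (rule ccontr)
  let ?P = "p ^ (\<alpha> - 1)"
  assume "coeff (indep_dom_poly (p ^ \<alpha>)) (k + 2) \<noteq> 0"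
  then obtain m' e' where "0 < m'" "m' < \<alpha>" "e' \<le> 1" "k + 2 = ?P - p ^ m' + e'"
    by (rule coeff_indep_dom_poly_nonzero)
  moreover obtain m e where "0 < m" "m < \<alpha>" "e \<le> 1" "k = ?P - p ^ m + e"
    using assms(2) by (rule coeff_indep_dom_poly_nonzero)
  moreover have "m \<le> \<alpha> - 1" "m' \<le> \<alpha> - 1" using \<open>m < \<alpha>\<close> \<open>m' < \<alpha>\<close> by simp_all
  ultimately show False using assms(1) diff_power_add_ne_plus_2[of p m m' "\<alpha> - 1" e e'] by simp
qed

lemma coeff_indep_dom_poly_2:
  assumes "3 \<le> p"
  shows "coeff (indep_dom_poly (p ^ \<alpha>)) 2 = 0"
proof (rule ccontr)
  assume "coeff (indep_dom_poly (p ^ \<alpha>)) 2 \<noteq> 0"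
  \<comment> \<open>the size \<open>2\<close> would exceed \<open>0 = p ^ (\<alpha> - 1) - p ^ (\<alpha> - 1)\<close> by two\<close>
  then show False using assms two_le_exp diff_power_add_ne_plus_2[of p "\<alpha> - 1" _ "\<alpha> - 1" 0]
    by (elim coeff_indep_dom_poly_nonzero) auto
qed

lemma coeff_indep_dom_poly_1: "0 < coeff (indep_dom_poly (p ^ \<alpha>)) 1"
proof -
  have "\<not> 2 * (\<alpha> - 1) < \<alpha>" using two_le_exp by linarith
  then show ?thesis using two_le_exp coeff_indep_dom_poly_pos[of "\<alpha> - 1"] by simp
qed

lemma coeff_indep_dom_poly_pos_ge_3:
  assumes "3 \<le> p" "3 \<le> \<alpha>"
  obtains d where "3 \<le> d" "0 < coeff (indep_dom_poly (p ^ \<alpha>)) d"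
proof -
  let ?q = "p ^ (\<alpha> - 2)"
  have "p ^ 1 \<le> ?q" using assms prime_gt_0_nat[OF prime] by (intro power_increasing) auto
  then have "p \<le> ?q" by simp
  moreover have "p ^ (\<alpha> - 1) = p * ?q" using assms by (simp flip: power_Suc)
  moreover have "3 * ?q \<le> p * ?q" using assms by simp
  ultimately have "3 \<le> p ^ (\<alpha> - 1) - ?q" using assms by linarith
  moreover have "0 < coeff (indep_dom_poly (p ^ \<alpha>)) (p ^ (\<alpha> - 1) - ?q + (if 2 * (\<alpha> - 2) < \<alpha> then 0 else 1))"
    using assms coeff_indep_dom_poly_pos[of "\<alpha> - 2"] by simp
  ultimately show ?thesis by (rule that[OF trans_le_add1])
qed

end

theorem mainTheorem6:
  fixes p \<alpha> n :: nat
  assumes "prime p" and "p > 2" and "\<alpha> \<ge> 3" and "n = p ^ \<alpha>"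
  shows "log_concave (indep_dom_poly n) \<and> \<not> unimodal (indep_dom_poly n)"
proof -
  interpret prime_power_zero_divisor_graph p \<alpha> using assms by unfold_locales auto
  have "3 \<le> p" using assms(2) by simp
  have "log_concave (indep_dom_poly n)"
    unfolding assms(4) using \<open>3 \<le> p\<close> coeff_indep_dom_poly_gap
    by (intro log_concave_if_no_gap_two)
  moreover obtain d where "3 \<le> d" "0 < coeff (indep_dom_poly n) d"
    unfolding assms(4) using \<open>3 \<le> p\<close> assms(3) by (rule coeff_indep_dom_poly_pos_ge_3)
  then have "\<not> unimodal (indep_dom_poly n)"
    unfolding assms(4) using \<open>3 \<le> p\<close> coeff_indep_dom_poly_1 coeff_indep_dom_poly_2
    by (intro not_unimodal_if_internal_zero[of 1 2 d]) auto
  ultimately show ?thesis ..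
qed

end
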